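(* Let $N=2^n$ and $i\in[0,N)$. Then $S^{(n)}_{i,w}=0$ for all $w<\mathrm{w}(\mathbf{g}_i)$, where $\mathrm{w}(\mathbf{g}_i)=2^{p_{n-1}(i)}$, and the first nonzero component $s^{(n)}_i:=S^{(n)}_{i,\mathrm{w}(\mathbf{g}_i)}$ satisfies $$\log_2 s^{(n)}_i=\sum_{j=0}^{n-1}(1-b_j(i))\,2^{p_j(i)}.$$
   Context: All vectors are binary (over $GF(2)$), indices are zero-based. Let $G_2=\begin{pmatrix}1&0\\1&1\end{pmatrix}$ and $G_N=G_2^{\otimes n}$ for $N=2^n$, with rows $\mathbf{g}_0,\ldots,\mathbf{g}_{N-1}$; $\mathrm{w}(\cdot)$ is Hamming weight. $S^{(n)}_{i,w}$ is the number of words of Hamming weight $w$ in $\mathbf{g}_i+\langle\mathbf{g}_{i+1},\ldots,\mathbf{g}_{N-1}\rangle$. For $i\in[0,N)$ write $i=\sum_{j=0}^{n-1}b_j(i)2^j$ with $b_j(i)\in\{0,1\}$, and $p_j(i):=\sum_{s=0}^{j}b_s(i)$. *)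

theory Defs
  imports Complex_Main
begin

text \<open>Binary vectors of length N are represented as functions nat \<Rightarrow> bool
  (True = 1), with coordinates in {0..<N}; entries outside are False.\<close>

definition G2 :: "nat \<Rightarrow> nat \<Rightarrow> bool" where
  "G2 a b = (a < 2 \<and> b < 2 \<and> b \<le> a)"

text \<open>Kronecker power G_N = G_2^{\<otimes> n}, via G_2^{\<otimes>(n+1)} = G_2 \<otimes> G_2^{\<otimes> n};
  GN n i k is the entry in row i, column k.\<close>
fun GN :: "nat \<Rightarrow> nat \<Rightarrow> nat \<Rightarrow> bool" where
  "GN 0 i k = (i = 0 \<and> k = 0)"
| "GN (Suc n) i k = (i < 2 * 2^n \<and> k < 2 * 2^n \<and>
      G2 (i div 2^n) (k div 2^n) \<and> GN n (i mod 2^n) (k mod 2^n))"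

definition grow :: "nat \<Rightarrow> nat \<Rightarrow> nat \<Rightarrow> bool" where
  "grow n i = (\<lambda>k. GN n i k)"

definition hw :: "nat \<Rightarrow> (nat \<Rightarrow> bool) \<Rightarrow> nat" where
  "hw n v = card {k. k < 2^n \<and> v k}"

definition rowsum :: "nat \<Rightarrow> nat set \<Rightarrow> nat \<Rightarrow> bool" where
  "rowsum n T = (\<lambda>k. odd (card {j \<in> T. grow n j k}))"

definition coset :: "nat \<Rightarrow> nat \<Rightarrow> (nat \<Rightarrow> bool) set" where
  "coset n i = {(\<lambda>k. grow n i k \<noteq> rowsum n T k) | T. T \<subseteq> {i+1..<2^n}}"

definition S :: "nat \<Rightarrow> nat \<Rightarrow> nat \<Rightarrow> nat" where
  "S n i w = card {v \<in> coset n i. hw n v = w}"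

definition bd :: "nat \<Rightarrow> nat \<Rightarrow> nat" where
  "bd j i = (i div 2^j) mod 2"

definition pp :: "nat \<Rightarrow> nat \<Rightarrow> nat" where
  "pp j i = (\<Sum>s\<le>j. bd s i)"

end

theory Submission
  imports Defs
begin

text \<open>Since \<open>G\<^sub>2\<^sub>N = [[G\<^sub>N, 0], [G\<^sub>N, G\<^sub>N]]\<close>, row \<open>i < N\<close> of \<open>G\<^sub>2\<^sub>N\<close> is
  \<open>(g\<^sub>i|0)\<close> and row \<open>N + i\<close> is \<open>(g\<^sub>i|g\<^sub>i)\<close>. Hence the coset of \<open>g\<^sub>i\<close> one level up
  consists of the words \<open>(x + y|y)\<close> with \<open>x\<close> in the coset of \<open>g\<^sub>i\<close> and \<open>y\<close> arbitrary,
  while the coset of \<open>g\<^sub>N\<^sub>+\<^sub>i\<close> consists of the words \<open>(x|x)\<close>. As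
  \<open>w(x + y|y) = w(x) + 2|supp y - supp x|\<close>, in the first case the minimum weight is unchanged
  and each minimum-weight \<open>x\<close> yields one minimum-weight word for every \<open>y \<subseteq> x\<close>, i.e.
  \<open>2\<^bsup>w(g\<^sub>i)\<^esup>\<close> of them; in the second case weights double and counts are kept.
  Induction on the binary digits of \<open>i\<close> gives the formula.\<close>

definition words :: "nat \<Rightarrow> (nat \<Rightarrow> bool) set" where
  "words n = {v. \<forall>k. v k \<longrightarrow> k < 2^n}"

definition xor_word :: "(nat \<Rightarrow> bool) \<Rightarrow> (nat \<Rightarrow> bool) \<Rightarrow> nat \<Rightarrow> bool" where
  "xor_word u v = (\<lambda>k. u k \<noteq> v k)"

definition append_word :: "nat \<Rightarrow> (nat \<Rightarrow> bool) \<Rightarrow> (nat \<Rightarrow> bool) \<Rightarrow> nat \<Rightarrow> bool" where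
  "append_word n u v = (\<lambda>k. if k < 2^n then u k else v (k - 2^n))"

lemma xor_append_word:
  "xor_word (append_word n a b) (append_word n c d) = append_word n (xor_word a c) (xor_word b d)"
  unfolding xor_word_def append_word_def by auto

lemma xor_word_in_words: "u \<in> words n \<Longrightarrow> v \<in> words n \<Longrightarrow> xor_word u v \<in> words n"
  unfolding words_def xor_word_def by auto

lemma hw_append_word: "hw (Suc n) (append_word n u v) = hw n u + hw n v"
proof -
  have "{k. k < 2^Suc n \<and> append_word n u v k}
      = {k. k < 2^n \<and> u k} \<union> (\<lambda>k. 2^n + k) ` {k. k < 2^n \<and> v k}"
  proof (rule set_eqI)
    fix k
    show "k \<in> {k. k < 2^Suc n \<and> append_word n u v k}
      \<longleftrightarrow> k \<in> {k. k < 2^n \<and> u k} \<union> (\<lambda>k. 2^n + k) ` {k. k < 2^n \<and> v k}"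
    proof (cases "k < 2^n")
      case False
      have "k \<in> (\<lambda>k. 2^n + k) ` A \<longleftrightarrow> k - 2^n \<in> A" for A
        using False by (force intro: rev_image_eqI[of "k - 2^n"])
      moreover have "k < 2^Suc n \<longleftrightarrow> k - 2^n < 2^n"
        using False by auto
      ultimately show ?thesis
        using False by (simp add: append_word_def)
    qed (auto simp: append_word_def)
  qed
  moreover have "card ({k. k < 2^n \<and> u k} \<union> (\<lambda>k. 2^n + k) ` {k. k < 2^n \<and> v k})
      = hw n u + hw n v"
    unfolding hw_def by (subst card_Un_disjoint) (auto simp: card_image inj_on_def)
  ultimately show ?thesis
    unfolding hw_def by simp
qed

lemma hw_xor_word:
  "hw n (xor_word x y) + hw n y = hw n x + 2 * card {k. k < 2^n \<and> y k \<and> \<not> x k}"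
proof -
  define X where "X = {k. k < 2^n \<and> x k}"
  define Y where "Y = {k. k < 2^n \<and> y k}"
  have fin: "finite X" "finite Y"
    unfolding X_def Y_def by auto
  have "{k. k < 2^n \<and> xor_word x y k} = (X - Y) \<union> (Y - X)"
    unfolding X_def Y_def xor_word_def by auto
  then have "hw n (xor_word x y) = card (X - Y) + card (Y - X)"
    unfolding hw_def using fin by (simp add: card_Un_disjoint Diff_Int_distrib2)
  moreover have "hw n x = card (X \<inter> Y) + card (X - Y)" "hw n y = card (X \<inter> Y) + card (Y - X)"
    unfolding hw_def X_def[symmetric] Y_def[symmetric]
    using card_Int_Diff[OF fin(1), of Y] card_Int_Diff[OF fin(2), of X] by (simp_all add: Int_commute)
  moreover have "card {k. k < 2^n \<and> y k \<and> \<not> x k} = card (Y - X)"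
    unfolding X_def Y_def by (rule arg_cong[where f = card]) auto
  ultimately show ?thesis
    by linarith
qed

lemma hw_eq_card_support: "v \<in> words n \<Longrightarrow> hw n v = card {k. v k}"
  unfolding hw_def words_def by (rule arg_cong[where f = card]) auto

lemma card_subwords:
  assumes "finite {k. x k}"
  shows "card {y. \<forall>k. y k \<longrightarrow> x k} = 2 ^ card {k. x k}"
proof -
  have "{y. \<forall>k. y k \<longrightarrow> x k} = (\<lambda>A k. k \<in> A) ` Pow {k. x k}"
  proof (intro subset_antisym subsetI)
    fix y assume "y \<in> {y. \<forall>k. y k \<longrightarrow> x k}"
    then show "y \<in> (\<lambda>A k. k \<in> A) ` Pow {k. x k}"
      by (intro rev_image_eqI[of "{k. y k}"]) auto
  qed auto
  moreover have "inj_on (\<lambda>A k. k \<in> A) (Pow {k. x k})"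
    by (rule inj_onI) (simp add: fun_eq_iff set_eq_iff)
  ultimately have "card {y. \<forall>k. y k \<longrightarrow> x k} = card (Pow {k. x k})"
    by (simp add: card_image)
  then show ?thesis
    using assms by (simp add: card_Pow)
qed

lemma less_pow2_SucE:
  fixes i :: nat
  assumes "i < 2^Suc n" "\<not> i < 2^n"
  obtains i' where "i = 2^n + i'" "i' < 2^n"
  using assms by (intro that[of "i - 2^n"]) auto

lemma finite_Collect_add_mem: "finite T \<Longrightarrow> finite {j :: nat. m + j \<in> T}"
  using finite_vimageI[of T "\<lambda>j. m + j"] by (simp add: vimage_def inj_def)

lemma GN_imp_less: "GN n i k \<Longrightarrow> i < 2^n \<and> k < 2^n"
  by (induction n arbitrary: i k) auto

lemma grow_in_words: "grow n i \<in> words n"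
  using GN_imp_less unfolding words_def grow_def by blast

lemma rowsum_empty: "rowsum n {} = (\<lambda>_. False)"
  unfolding rowsum_def by simp

lemma rowsum_insert:
  assumes "finite T" "j \<notin> T"
  shows "rowsum n (insert j T) = xor_word (grow n j) (rowsum n T)"
proof
  fix k
  have "{j' \<in> insert j T. grow n j' k}
      = (if grow n j k then insert j {j' \<in> T. grow n j' k} else {j' \<in> T. grow n j' k})"
    by auto
  then show "rowsum n (insert j T) k = xor_word (grow n j) (rowsum n T) k"
    using assms unfolding rowsum_def xor_word_def by simp
qed

lemma rowsum_in_words: "finite T \<Longrightarrow> rowsum n T \<in> words n"
proof (induction T rule: finite_induct)
  case empty
  then show ?case
    by (simp add: rowsum_empty words_def)
next
  case (insert j T)
  then show ?case
    by (simp add: rowsum_insert xor_word_in_words grow_in_words)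
qed

lemma grow_Suc_low:
  assumes "i < 2^n"
  shows "grow (Suc n) i = append_word n (grow n i) (\<lambda>_. False)"
proof
  fix k
  show "grow (Suc n) i k = append_word n (grow n i) (\<lambda>_. False) k"
  proof (cases "k < 2^n")
    case False
    then have "k div 2^n \<ge> 1"
      using div_le_mono[of "2^n" k "2^n"] by simp
    then show ?thesis
      using assms False by (auto simp: grow_def append_word_def G2_def)
  qed (use assms in \<open>simp add: grow_def append_word_def G2_def\<close>)
qed

lemma grow_Suc_high:
  assumes "i < 2^n"
  shows "grow (Suc n) (2^n + i) = append_word n (grow n i) (grow n i)"
proof
  fix k :: nat
  consider "k < 2^n" | "2^n \<le> k" "k < 2 * 2^n" | "2 * 2^n \<le> k"
    by linarith
  then show "grow (Suc n) (2^n + i) k = append_word n (grow n i) (grow n i) k"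
  proof cases
    case 1
    then show ?thesis
      using assms by (simp add: grow_def append_word_def G2_def)
  next
    case 2
    then have "k div 2^n = 1" "k mod 2^n = k - 2^n"
      using div_le_mono[of "2^n" k "2^n"] less_mult_imp_div_less[of k 2 "2^n"]
      by (simp_all add: mult.commute le_mod_geq)
    then show ?thesis
      using assms 2 by (auto simp: grow_def append_word_def G2_def)
  next
    case 3
    then show ?thesis
      using GN_imp_less[of n i "k - 2^n"] by (auto simp: grow_def append_word_def)
  qed
qed

lemma rowsum_Suc:
  assumes "T \<subseteq> {..<2^Suc n}"
  shows "rowsum (Suc n) T = append_word n
    (xor_word (rowsum n {j \<in> T. j < 2^n}) (rowsum n {j. 2^n + j \<in> T})) (rowsum n {j. 2^n + j \<in> T})"
  using finite_subset[OF assms finite_lessThan] assms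
proof (induction T rule: finite_induct)
  case empty
  then show ?case
    by (simp add: rowsum_empty append_word_def xor_word_def)
next
  case (insert a T)
  then have a: "a < 2^Suc n" and IH: "rowsum (Suc n) T = append_word n
    (xor_word (rowsum n {j \<in> T. j < 2^n}) (rowsum n {j. 2^n + j \<in> T})) (rowsum n {j. 2^n + j \<in> T})"
    by simp_all
  have fin: "finite {j. 2^n + j \<in> T}"
    using insert.hyps(1) by (rule finite_Collect_add_mem)
  let ?A = "{j \<in> T. j < 2^n}" and ?B = "{j. 2^n + j \<in> T}"
  show ?case
  proof (cases "a < 2^n")
    case True
    have sets: "{j \<in> insert a T. j < 2^n} = insert a ?A" "{j. 2^n + j \<in> insert a T} = ?B"
      using True by auto
    have "rowsum n (insert a ?A) = xor_word (grow n a) (rowsum n ?A)"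
      using insert.hyps by (simp add: rowsum_insert)
    moreover have "rowsum (Suc n) (insert a T) = xor_word (append_word n (grow n a) (\<lambda>_. False))
        (rowsum (Suc n) T)"
      using insert.hyps True by (simp add: rowsum_insert grow_Suc_low)
    ultimately show ?thesis
      unfolding sets IH xor_append_word by (auto simp: xor_word_def append_word_def fun_eq_iff)
  next
    case False
    with a obtain b where b: "a = 2^n + b" "b < 2^n"
      by (rule less_pow2_SucE)
    have sets: "{j \<in> insert a T. j < 2^n} = ?A" "{j. 2^n + j \<in> insert a T} = insert b ?B"
      using b by auto
    have "rowsum n (insert b ?B) = xor_word (grow n b) (rowsum n ?B)"
      using insert.hyps b fin by (simp add: rowsum_insert)
    moreover have "rowsum (Suc n) (insert a T) = xor_word (append_word n (grow n b) (grow n b))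
        (rowsum (Suc n) T)"
      using insert.hyps b by (simp add: rowsum_insert grow_Suc_high)
    ultimately show ?thesis
      unfolding sets IH xor_append_word by (auto simp: xor_word_def append_word_def fun_eq_iff)
  qed
qed

lemma rowsum_surj: "v \<in> words n \<Longrightarrow> \<exists>T \<subseteq> {..<2^n}. rowsum n T = v"
proof (induction n arbitrary: v)
  case 0
  then have v: "v = (\<lambda>k. k = 0 \<and> v 0)"
    unfolding words_def by auto
  show ?case
  proof (cases "v 0")
    case True
    have "rowsum 0 {0} = v"
      by (subst v) (auto simp: True rowsum_insert[of "{}"] rowsum_empty grow_def xor_word_def)
    then show ?thesis
      by (intro exI[of _ "{0}"]) simp
  next
    case False
    have "rowsum 0 {} = v"
      by (subst v) (simp add: False rowsum_empty)
    then show ?thesis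
      by (intro exI[of _ "{}"]) simp
  qed
next
  case (Suc n)
  define b where "b = (\<lambda>k. v (2^n + k))"
  define a where "a = xor_word (\<lambda>k. k < 2^n \<and> v k) b"
  have "b \<in> words n" "a \<in> words n"
    using Suc.prems unfolding words_def a_def b_def xor_word_def by auto
  then obtain A B where A: "A \<subseteq> {..<2^n}" "rowsum n A = a" and B: "B \<subseteq> {..<2^n}" "rowsum n B = b"
    using Suc.IH by (metis (no_types))
  define T where "T = A \<union> (\<lambda>j. 2^n + j) ` B"
  have T: "T \<subseteq> {..<2^Suc n}" "{j \<in> T. j < 2^n} = A" "{j. 2^n + j \<in> T} = B"
    using A B unfolding T_def by auto
  have "rowsum (Suc n) T = v"
    using Suc.prems unfolding rowsum_Suc[OF T(1)] T(2,3) A B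
    by (auto simp: append_word_def xor_word_def a_def b_def words_def)
  then show ?case
    using T(1) by blast
qed

lemma coset_eq_image: "coset n i = (\<lambda>T. xor_word (grow n i) (rowsum n T)) ` Pow {i+1..<2^n}"
  unfolding coset_def xor_word_def by auto

lemma finite_coset: "finite (coset n i)"
  unfolding coset_eq_image by simp

lemma coset_subset_words: "coset n i \<subseteq> words n"
  unfolding coset_eq_image
  using grow_in_words rowsum_in_words[OF finite_subset[OF _ finite_atLeastLessThan]]
  by (blast intro: xor_word_in_words)

lemma coset_Suc_low:
  assumes i: "i < 2^n"
  shows "coset (Suc n) i = (\<lambda>(x, y). append_word n (xor_word x y) y) ` (coset n i \<times> words n)"
proof (intro subset_antisym subsetI)
  fix v assume "v \<in> coset (Suc n) i"
  then obtain T where T: "T \<subseteq> {i+1..<2^Suc n}" and v: "v = xor_word (grow (Suc n) i) (rowsum (Suc n) T)"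
    unfolding coset_eq_image by auto
  define A where "A = {j \<in> T. j < 2^n}"
  define B where "B = {j. 2^n + j \<in> T}"
  have Tb: "T \<subseteq> {..<2^Suc n}"
    using T by auto
  have "xor_word (grow n i) (rowsum n A) \<in> coset n i"
    unfolding coset_eq_image A_def using T by (intro imageI) auto
  moreover have "finite B"
    unfolding B_def using finite_subset[OF T finite_atLeastLessThan] by (rule finite_Collect_add_mem)
  moreover have "v = append_word n (xor_word (xor_word (grow n i) (rowsum n A)) (rowsum n B)) (rowsum n B)"
    unfolding v grow_Suc_low[OF i] rowsum_Suc[OF Tb] A_def[symmetric] B_def[symmetric]
    by (auto simp: xor_word_def append_word_def)
  ultimately show "v \<in> (\<lambda>(x, y). append_word n (xor_word x y) y) ` (coset n i \<times> words n)"
    using rowsum_in_words by blast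
next
  fix v assume "v \<in> (\<lambda>(x, y). append_word n (xor_word x y) y) ` (coset n i \<times> words n)"
  then obtain x y where x: "x \<in> coset n i" and y: "y \<in> words n" and v: "v = append_word n (xor_word x y) y"
    by auto
  obtain A where A: "A \<subseteq> {i+1..<2^n}" and xA: "x = xor_word (grow n i) (rowsum n A)"
    using x unfolding coset_eq_image by auto
  obtain B where B: "B \<subseteq> {..<2^n}" and yB: "rowsum n B = y"
    using rowsum_surj[OF y] by auto
  define T where "T = A \<union> (\<lambda>j. 2^n + j) ` B"
  have T: "T \<subseteq> {i+1..<2^Suc n}" "T \<subseteq> {..<2^Suc n}" "{j \<in> T. j < 2^n} = A" "{j. 2^n + j \<in> T} = B"
    using A B i unfolding T_def by auto
  have "v = xor_word (grow (Suc n) i) (rowsum (Suc n) T)"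
    unfolding v grow_Suc_low[OF i] rowsum_Suc[OF T(2)] T(3,4) xA yB
    by (auto simp: xor_word_def append_word_def)
  then show "v \<in> coset (Suc n) i"
    unfolding coset_eq_image using T(1) by auto
qed

lemma coset_Suc_high:
  assumes i: "i < 2^n"
  shows "coset (Suc n) (2^n + i) = (\<lambda>x. append_word n x x) ` coset n i"
proof (intro subset_antisym subsetI)
  fix v assume "v \<in> coset (Suc n) (2^n + i)"
  then obtain T where T: "T \<subseteq> {2^n+i+1..<2^Suc n}"
    and v: "v = xor_word (grow (Suc n) (2^n + i)) (rowsum (Suc n) T)"
    unfolding coset_eq_image by auto
  define B where "B = {j. 2^n + j \<in> T}"
  have Tb: "T \<subseteq> {..<2^Suc n}" and low: "{j \<in> T. j < 2^n} = {}"
    using T by auto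
  have "v = append_word n (xor_word (grow n i) (rowsum n B)) (xor_word (grow n i) (rowsum n B))"
    unfolding v grow_Suc_high[OF i] rowsum_Suc[OF Tb] low B_def[symmetric]
    by (auto simp: rowsum_empty xor_word_def append_word_def)
  moreover have "xor_word (grow n i) (rowsum n B) \<in> coset n i"
    unfolding coset_eq_image B_def using T by (intro imageI) auto
  ultimately show "v \<in> (\<lambda>x. append_word n x x) ` coset n i"
    by blast
next
  fix v assume "v \<in> (\<lambda>x. append_word n x x) ` coset n i"
  then obtain B where B: "B \<subseteq> {i+1..<2^n}" and v: "v = append_word n
      (xor_word (grow n i) (rowsum n B)) (xor_word (grow n i) (rowsum n B))"
    unfolding coset_eq_image by auto
  define T where "T = (\<lambda>j. 2^n + j) ` B"
  have T: "T \<subseteq> {2^n+i+1..<2^Suc n}" "T \<subseteq> {..<2^Suc n}" "{j \<in> T. j < 2^n} = {}"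
    "{j. 2^n + j \<in> T} = B"
    using B unfolding T_def by auto
  have "v = xor_word (grow (Suc n) (2^n + i)) (rowsum (Suc n) T)"
    unfolding v grow_Suc_high[OF i] rowsum_Suc[OF T(2)] T(3,4)
    by (auto simp: rowsum_empty xor_word_def append_word_def)
  then show "v \<in> coset (Suc n) (2^n + i)"
    unfolding coset_eq_image using T(1) by auto
qed

lemma hw_append_xor_word:
  "hw (Suc n) (append_word n (xor_word x y) y) = hw n x + 2 * card {k. k < 2^n \<and> y k \<and> \<not> x k}"
  unfolding hw_append_word using hw_xor_word[of n x y] by simp

lemma inj_on_append_xor_word: "inj_on (\<lambda>(x, y). append_word n (xor_word x y) y) (words n \<times> UNIV)"
proof (rule inj_onI, clarify)
  fix x y x' y'
  assume x: "x \<in> words n" "x' \<in> words n"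
    and eq: "append_word n (xor_word x y) y = append_word n (xor_word x' y') y'"
  have "y = y'"
    using fun_cong[OF eq, of "2^n + _"] by (auto simp: append_word_def)
  moreover have "x k = x' k" for k
    using fun_cong[OF eq, of k] x \<open>y = y'\<close> by (cases "k < 2^n") (auto simp: append_word_def xor_word_def words_def)
  ultimately show "x = x' \<and> y = y'"
    by auto
qed

lemma inj_append_word_self: "inj (\<lambda>x. append_word n x x)"
proof (rule injI)
  fix x y :: "nat \<Rightarrow> bool"
  assume eq: "append_word n x x = append_word n y y"
  show "x = y"
  proof
    fix k
    show "x k = y k"
      using fun_cong[OF eq, of "2^n + k"] by (simp add: append_word_def)
  qed
qed

definition coset_min_weight :: "nat \<Rightarrow> nat \<Rightarrow> nat \<Rightarrow> nat \<Rightarrow> bool" where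
  "coset_min_weight n i w c \<longleftrightarrow> hw n (grow n i) = w \<and> (\<forall>v \<in> coset n i. w \<le> hw n v)
    \<and> card {v \<in> coset n i. hw n v = w} = c"

lemma coset_min_weight_0: "coset_min_weight 0 0 1 1"
proof -
  have "{k. k < 2^0 \<and> grow 0 0 k} = {0}"
    by (auto simp: grow_def)
  then have "hw 0 (grow 0 0) = 1"
    unfolding hw_def by simp
  moreover have "coset 0 0 = {grow 0 0}"
    by (simp add: coset_eq_image rowsum_empty xor_word_def)
  moreover have "{v \<in> {grow 0 0}. hw 0 v = 1} = {grow 0 0}"
    using calculation(1) by auto
  ultimately show ?thesis
    unfolding coset_min_weight_def by simp
qed

lemma min_weight_words_Suc_low:
  assumes i: "i < 2^n" and lb: "\<forall>v \<in> coset n i. w \<le> hw n v"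
  shows "{v \<in> coset (Suc n) i. hw (Suc n) v = w} = (\<lambda>(x, y). append_word n (xor_word x y) y) `
    (SIGMA x:{x \<in> coset n i. hw n x = w}. {y. \<forall>k. y k \<longrightarrow> x k})"
proof (intro subset_antisym subsetI)
  fix v assume v: "v \<in> {v \<in> coset (Suc n) i. hw (Suc n) v = w}"
  then obtain x y where x: "x \<in> coset n i" and y: "y \<in> words n"
    and v_eq: "v = append_word n (xor_word x y) y"
    unfolding coset_Suc_low[OF i] by auto
  have "hw n x + 2 * card {k. k < 2^n \<and> y k \<and> \<not> x k} = w"
    using v v_eq hw_append_xor_word[of n x y] by simp
  moreover have "w \<le> hw n x"
    using lb x by blast
  ultimately have "hw n x = w" and "card {k. k < 2^n \<and> y k \<and> \<not> x k} = 0"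
    by linarith+
  moreover from this(2) have "\<forall>k. y k \<longrightarrow> x k"
    using y by (auto simp: words_def)
  ultimately show "v \<in> (\<lambda>(x, y). append_word n (xor_word x y) y) `
      (SIGMA x:{x \<in> coset n i. hw n x = w}. {y. \<forall>k. y k \<longrightarrow> x k})"
    using x v_eq by force
next
  fix v assume "v \<in> (\<lambda>(x, y). append_word n (xor_word x y) y) `
      (SIGMA x:{x \<in> coset n i. hw n x = w}. {y. \<forall>k. y k \<longrightarrow> x k})"
  then obtain x y where x: "x \<in> coset n i" "hw n x = w" and y: "\<forall>k. y k \<longrightarrow> x k"
    and v_eq: "v = append_word n (xor_word x y) y"
    by auto
  have "x \<in> words n"
    using x(1) coset_subset_words by blast
  then have "y \<in> words n"
    using y by (auto simp: words_def)
  moreover have "{k. k < 2^n \<and> y k \<and> \<not> x k} = {}"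
    using y by auto
  then have "hw (Suc n) v = w"
    using x(2) by (simp add: v_eq hw_append_xor_word)
  ultimately show "v \<in> {v \<in> coset (Suc n) i. hw (Suc n) v = w}"
    using x(1) unfolding v_eq coset_Suc_low[OF i] by auto
qed

lemma coset_min_weight_Suc_low:
  assumes i: "i < 2^n" and "coset_min_weight n i w c"
  shows "coset_min_weight (Suc n) i w (c * 2^w)"
proof -
  have g: "hw n (grow n i) = w" and lb: "\<forall>v \<in> coset n i. w \<le> hw n v"
    and c: "card {x \<in> coset n i. hw n x = w} = c"
    using assms(2) unfolding coset_min_weight_def by auto
  let ?X = "{x \<in> coset n i. hw n x = w}" and ?Y = "\<lambda>x. {y. \<forall>k. y k \<longrightarrow> x k}"
  have "hw n (\<lambda>_. False) = 0"
    by (simp add: hw_def)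
  then have "hw (Suc n) (grow (Suc n) i) = w"
    using g by (simp add: grow_Suc_low[OF i] hw_append_word)
  moreover have "\<forall>v \<in> coset (Suc n) i. w \<le> hw (Suc n) v"
    using lb unfolding coset_Suc_low[OF i] by (fastforce simp: hw_append_xor_word)
  moreover have "card (?Y x) = 2^w" if "x \<in> ?X" for x
  proof -
    have "x \<in> words n"
      using that coset_subset_words by blast
    then have "finite {k. x k}" "hw n x = card {k. x k}"
      by (auto simp: hw_eq_card_support words_def intro: finite_subset[of _ "{..<2^n}"])
    then show ?thesis
      using that card_subwords[of x] by simp
  qed
  then have "card (SIGMA x:?X. ?Y x) = c * 2^w"
    using c finite_coset by (simp add: card_SigmaI card_ge_0_finite)
  moreover have "inj_on (\<lambda>(x, y). append_word n (xor_word x y) y) (SIGMA x:?X. ?Y x)"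
    using coset_subset_words by (blast intro: inj_on_subset[OF inj_on_append_xor_word])
  ultimately show ?thesis
    unfolding coset_min_weight_def min_weight_words_Suc_low[OF i lb] by (simp add: card_image)
qed

lemma coset_min_weight_Suc_high:
  assumes i: "i < 2^n" and "coset_min_weight n i w c"
  shows "coset_min_weight (Suc n) (2^n + i) (2 * w) c"
proof -
  have "{v \<in> coset (Suc n) (2^n + i). hw (Suc n) v = 2 * w}
      = (\<lambda>x. append_word n x x) ` {x \<in> coset n i. hw n x = w}"
    unfolding coset_Suc_high[OF i] by (auto simp: hw_append_word)
  then show ?thesis
    using assms(2) inj_on_subset[OF inj_append_word_self]
    unfolding coset_min_weight_def coset_Suc_high[OF i] grow_Suc_high[OF i]
    by (auto simp: hw_append_word card_image)
qed

text \<open>\<open>digit_sum n i\<close> is \<open>p\<^sub>n\<^sub>-\<^sub>1(i)\<close>, but also meaningful for \<open>n = 0\<close>.\<close>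

definition digit_sum :: "nat \<Rightarrow> nat \<Rightarrow> nat" where
  "digit_sum n i = (\<Sum>s<n. bd s i)"

definition min_count_exp :: "nat \<Rightarrow> nat \<Rightarrow> nat" where
  "min_count_exp n i = (\<Sum>j<n. (1 - bd j i) * 2 ^ pp j i)"

lemma bd_less_pow2: "i < 2^n \<Longrightarrow> bd n i = 0"
  unfolding bd_def by simp

lemma bd_add_pow2_self: "i < 2^n \<Longrightarrow> bd n (2^n + i) = 1"
  unfolding bd_def by simp

lemma bd_add_pow2:
  assumes "j < n"
  shows "bd j (2^n + i) = bd j i"
proof -
  have "(2::nat)^n = 2^j * (2 * 2^(n - Suc j))"
    using assms by (simp flip: power_add power_Suc)
  then have "(2^n + i) div 2^j = 2 * 2^(n - Suc j) + i div 2^j"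
    by simp
  then show ?thesis
    unfolding bd_def by simp
qed

lemma pp_eq_digit_sum: "pp j i = digit_sum (Suc j) i"
  unfolding pp_def digit_sum_def using lessThan_Suc_atMost by simp

lemma digit_sum_Suc: "digit_sum (Suc n) i = digit_sum n i + bd n i"
  unfolding digit_sum_def by simp

lemma digit_sum_add_pow2: "digit_sum n (2^n + i) = digit_sum n i"
  unfolding digit_sum_def by (rule sum.cong) (simp_all add: bd_add_pow2)

lemma min_count_exp_Suc_low: "i < 2^n \<Longrightarrow> min_count_exp (Suc n) i = min_count_exp n i + 2 ^ digit_sum n i"
  unfolding min_count_exp_def by (simp add: bd_less_pow2 pp_eq_digit_sum digit_sum_def)

lemma min_count_exp_Suc_high: "i < 2^n \<Longrightarrow> min_count_exp (Suc n) (2^n + i) = min_count_exp n i"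
  unfolding min_count_exp_def pp_def
  by (simp add: bd_add_pow2_self, rule sum.cong) (simp_all add: bd_add_pow2)

lemma coset_min_weight_digits:
  "i < 2^n \<Longrightarrow> coset_min_weight n i (2 ^ digit_sum n i) (2 ^ min_count_exp n i)"
proof (induction n arbitrary: i)
  case 0
  then show ?case
    using coset_min_weight_0 by (simp add: digit_sum_def min_count_exp_def)
next
  case (Suc n)
  show ?case
  proof (cases "i < 2^n")
    case True
    then show ?thesis
      using coset_min_weight_Suc_low[OF True Suc.IH[OF True]]
      by (simp add: min_count_exp_Suc_low digit_sum_Suc bd_less_pow2 power_add)
  next
    case False
    with Suc.prems obtain i' where i': "i = 2^n + i'" "i' < 2^n"
      by (rule less_pow2_SucE)
    then show ?thesis
      using coset_min_weight_Suc_high[OF i'(2) Suc.IH[OF i'(2)]]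
      by (simp add: min_count_exp_Suc_high digit_sum_Suc digit_sum_add_pow2 bd_add_pow2_self)
  qed
qed

text \<open>For \<open>n = 0\<close> the truncated \<open>n - 1 = 0\<close> is harmless because then \<open>i = 0\<close>.\<close>

lemma pp_pred_eq_digit_sum: "i < 2^n \<Longrightarrow> pp (n - 1) i = digit_sum n i"
  by (cases n) (simp_all add: pp_eq_digit_sum pp_def bd_def digit_sum_def)

theorem theorem2:
  fixes n i :: nat
  assumes "i < 2^n"
  shows "hw n (grow n i) = 2 ^ pp (n - 1) i
    \<and> (\<forall>w < hw n (grow n i). S n i w = 0)
    \<and> log 2 (real (S n i (hw n (grow n i))))
        = real (\<Sum>j<n. (1 - bd j i) * 2 ^ pp j i)"
proof -
  have w: "hw n (grow n i) = 2 ^ digit_sum n i"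
    and lb: "\<forall>v \<in> coset n i. 2 ^ digit_sum n i \<le> hw n v"
    and c: "S n i (2 ^ digit_sum n i) = 2 ^ min_count_exp n i"
    using coset_min_weight_digits[OF assms] unfolding coset_min_weight_def S_def by auto
  have "S n i w = 0" if "w < hw n (grow n i)" for w
  proof -
    have none: "{v \<in> coset n i. hw n v = w} = {}"
      using lb that unfolding w by fastforce
    show ?thesis
      unfolding S_def none by simp
  qed
  then show ?thesis
    using w c pp_pred_eq_digit_sum[OF assms] by (simp add: min_count_exp_def)
qed

end
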